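(* Let $X$ be a finite connected poset of length $1$. Then $\mathcal{M}(X)=\mathcal{P}(X)$ if and only if $|\mathrm{Min}(X)|=1$ or $|\mathrm{Max}(X)|=1$.
   Context: The length of $X$ is the maximum of $|C|-1$ over chains $C\subseteq X$. $\mathrm{Min}(X)$, $\mathrm{Max}(X)$ are the sets of minimal and maximal elements. For $x<y$, $e_{xy}$ denotes the incidence-algebra basis element and $B=\{e_{xy}:x<y\}$. $\mathcal{C}(X)$ is the set of maximal chains. For a bijection $\theta:B\to B$ and $C:u_1<\dots<u_m$ in $\mathcal{C}(X)$, $\theta$ is increasing on $C$ if there is $D:v_1<\dots<v_m$ in $\mathcal{C}(X)$ with $\theta(e_{u_iu_j})=e_{v_iv_j}$ for all $i<j$, decreasing if $\theta(e_{u_iu_j})=e_{v_{m-j+1}v_{m-i+1}}$ for all $i<j$. $\mathcal{M}(X)$ is the set of bijections $B\to B$ increasing or decreasing on every maximal chain. $\theta:B\to B$ is proper if there is an automorphism $\lambda$ of $X$ with $\theta(e_{xy})=e_{\lambda(x)\lambda(y)}$ for all $x<y$, or an anti-automorphism $\lambda$ of $X$ with $\theta(e_{xy})=e_{\lambda(y)\lambda(x)}$ for all $x<y$; $\mathcal{P}(X)$ is the set of proper bijections. *)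

theory Defs
  imports Main
begin

text \<open>A finite poset is modelled as a finite carrier set X inside a type of class order,
with the induced order. Basis elements e_xy (x<y) are modelled as pairs (x,y).\<close>

definition is_chain :: "'a::order set \<Rightarrow> 'a set \<Rightarrow> bool" where
  "is_chain X C \<longleftrightarrow> C \<subseteq> X \<and> (\<forall>x\<in>C. \<forall>y\<in>C. x \<le> y \<or> y \<le> x)"

definition poset_length :: "'a::order set \<Rightarrow> nat" where
  "poset_length X = Max {card C - 1 | C. is_chain X C}"

definition poset_connected :: "'a::order set \<Rightarrow> bool" where
  "poset_connected X \<longleftrightarrow> X \<noteq> {} \<and>
     (\<forall>x\<in>X. \<forall>y\<in>X. (x, y) \<in> ({(a, b). a \<in> X \<and> b \<in> X \<and> (a \<le> b \<or> b \<le> a)})\<^sup>*)"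

definition Min_el :: "'a::order set \<Rightarrow> 'a set" where
  "Min_el X = {x \<in> X. \<not> (\<exists>y\<in>X. y < x)}"

definition Max_el :: "'a::order set \<Rightarrow> 'a set" where
  "Max_el X = {x \<in> X. \<not> (\<exists>y\<in>X. x < y)}"

definition basisB :: "'a::order set \<Rightarrow> ('a \<times> 'a) set" where
  "basisB X = {(x, y). x \<in> X \<and> y \<in> X \<and> x < y}"

definition is_max_chain :: "'a::order set \<Rightarrow> 'a set \<Rightarrow> bool" where
  "is_max_chain X C \<longleftrightarrow> is_chain X C \<and> (\<forall>C'. is_chain X C' \<and> C \<subseteq> C' \<longrightarrow> C' = C)"

definition max_chain_list :: "'a::order set \<Rightarrow> 'a list \<Rightarrow> bool" where
  "max_chain_list X us \<longleftrightarrow> sorted_wrt (<) us \<and> is_max_chain X (set us)"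

definition increasing_on :: "'a::order set \<Rightarrow> ('a \<times> 'a \<Rightarrow> 'a \<times> 'a) \<Rightarrow> 'a list \<Rightarrow> bool" where
  "increasing_on X \<theta> us \<longleftrightarrow> (\<exists>vs. max_chain_list X vs \<and> length vs = length us \<and>
     (\<forall>i j. i < j \<and> j < length us \<longrightarrow> \<theta> (us ! i, us ! j) = (vs ! i, vs ! j)))"

definition decreasing_on :: "'a::order set \<Rightarrow> ('a \<times> 'a \<Rightarrow> 'a \<times> 'a) \<Rightarrow> 'a list \<Rightarrow> bool" where
  "decreasing_on X \<theta> us \<longleftrightarrow> (\<exists>vs. max_chain_list X vs \<and> length vs = length us \<and>
     (\<forall>i j. i < j \<and> j < length us \<longrightarrow>
        \<theta> (us ! i, us ! j) = (vs ! (length us - 1 - j), vs ! (length us - 1 - i))))"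

definition M_set :: "'a::order set \<Rightarrow> ('a \<times> 'a \<Rightarrow> 'a \<times> 'a) set" where
  "M_set X = {\<theta>. bij_betw \<theta> (basisB X) (basisB X) \<and>
     (\<forall>us. max_chain_list X us \<longrightarrow> increasing_on X \<theta> us \<or> decreasing_on X \<theta> us)}"

definition is_automorphism :: "'a::order set \<Rightarrow> ('a \<Rightarrow> 'a) \<Rightarrow> bool" where
  "is_automorphism X f \<longleftrightarrow> bij_betw f X X \<and> (\<forall>x\<in>X. \<forall>y\<in>X. x \<le> y \<longleftrightarrow> f x \<le> f y)"

definition is_anti_automorphism :: "'a::order set \<Rightarrow> ('a \<Rightarrow> 'a) \<Rightarrow> bool" where
  "is_anti_automorphism X f \<longleftrightarrow> bij_betw f X X \<and> (\<forall>x\<in>X. \<forall>y\<in>X. x \<le> y \<longleftrightarrow> f y \<le> f x)"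

definition P_set :: "'a::order set \<Rightarrow> ('a \<times> 'a \<Rightarrow> 'a \<times> 'a) set" where
  "P_set X = {\<theta>. bij_betw \<theta> (basisB X) (basisB X) \<and>
     ((\<exists>f. is_automorphism X f \<and> (\<forall>(x, y)\<in>basisB X. \<theta> (x, y) = (f x, f y))) \<or>
      (\<exists>f. is_anti_automorphism X f \<and> (\<forall>(x, y)\<in>basisB X. \<theta> (x, y) = (f y, f x))))}"

end

theory Submission
  imports Defs "HOL-Combinatorics.Transposition"
begin

(* In a connected poset of length one every maximal chain is a single relation x < y, so
   M(X) consists of all permutations of B. A proper map is induced by a map on points, hence
   preserves the relation "e and f share an endpoint". If Min(X) and Max(X) both have two
   elements, connectivity yields e, f sharing an endpoint and g disjoint from e, and the
   transposition of f and g is not proper. If instead Min(X) or Max(X) is a single point m,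
   every basis element has m as an endpoint, so a permutation of B is the same as a
   permutation of the points other than m, and any such permutation is an automorphism. *)

lemma finite_chain_lengths:
  assumes "finite X"
  shows "finite {card C - 1 | C. is_chain X C}"
proof -
  have "{card C - 1 | C. is_chain X C} \<subseteq> (\<lambda>C. card C - 1) ` Pow X"
    unfolding is_chain_def by blast
  then show ?thesis
    using assms by (meson finite_Pow_iff finite_imageI finite_subset)
qed

lemma card_chain_le_2:
  assumes "finite X" "poset_length X = 1" "is_chain X C"
  shows "card C \<le> 2"
proof -
  have "card C - 1 \<le> poset_length X"
    unfolding poset_length_def using finite_chain_lengths[OF assms(1)] assms(3)
    by (intro Max_ge) auto
  then show ?thesis
    using assms(2) by simp
qed

lemma poset_length_one_obtains_less:
  assumes "finite X" "poset_length X = 1"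
  obtains a b where "a \<in> X" "b \<in> X" "a < b"
proof -
  have "{card C - 1 | C. is_chain X C} \<noteq> {}"
    unfolding is_chain_def by blast
  then have "poset_length X \<in> {card C - 1 | C. is_chain X C}"
    unfolding poset_length_def using finite_chain_lengths[OF assms(1)] by (intro Max_in)
  then obtain C where C: "is_chain X C" "card C = 2"
    using assms(2) by auto
  then obtain a b where "C = {a, b}" "a \<noteq> b"
    by (meson card_2_iff)
  with C(1) show ?thesis
    unfolding is_chain_def by (metis insertCI order.not_eq_order_implies_strict subsetD that)
qed

lemma poset_length_one_no_less_less:
  assumes "finite X" "poset_length X = 1" "x \<in> X" "y \<in> X" "z \<in> X" "x < y" "y < z"
  shows False
proof -
  have "is_chain X {x, y, z}"
    using assms unfolding is_chain_def by auto
  then have "card {x, y, z} \<le> 2"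
    using card_chain_le_2 assms(1,2) by blast
  moreover have "x \<noteq> y" "y \<noteq> z" "x \<noteq> z"
    using assms(6,7) by auto
  then have "card {x, y, z} = 3"
    by simp
  ultimately show False
    by simp
qed

lemma less_imp_Min_el_Max_el:
  assumes "finite X" "poset_length X = 1" "a \<in> X" "b \<in> X" "a < b"
  shows "a \<in> Min_el X" "b \<in> Max_el X"
  using poset_length_one_no_less_less[OF assms(1,2)] assms
  unfolding Min_el_def Max_el_def by blast+

lemma poset_connected_crossing:
  assumes "poset_connected X" "S \<subseteq> X" "s \<in> S" "y \<in> X - S"
  obtains s' t where "s' \<in> S" "t \<in> X - S" "s' \<le> t \<or> t \<le> s'"
proof -
  have "(s, y) \<in> {(a, b). a \<in> X \<and> b \<in> X \<and> (a \<le> b \<or> b \<le> a)}\<^sup>*"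
    using assms unfolding poset_connected_def by blast
  then have "y \<in> S \<or> (\<exists>s'\<in>S. \<exists>t\<in>X - S. s' \<le> t \<or> t \<le> s')"
    by (induction rule: rtrancl_induct) (use assms(3) in blast)+
  then show ?thesis
    using assms(4) that by blast
qed

lemma poset_connected_obtains_comparable:
  assumes "poset_connected X" "x \<in> X" "y \<in> X" "x \<noteq> y"
  obtains t where "t \<in> X" "t \<noteq> x" "x \<le> t \<or> t \<le> x"
  using poset_connected_crossing[OF assms(1), of "{x}" x y] assms by blast

lemma max_chain_list_pair:
  assumes "finite X" "poset_length X = 1" "u \<in> X" "v \<in> X" "u < v"
  shows "max_chain_list X [u, v]"
proof -
  have "C = {u, v}" if "is_chain X C" "{u, v} \<subseteq> C" for C
  proof -
    have "finite C"
      using that(1) assms(1) unfolding is_chain_def by (meson finite_subset)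
    moreover have "card C \<le> card {u, v}"
      using card_chain_le_2[OF assms(1,2) that(1)] assms(5) by simp
    ultimately show ?thesis
      using that(2) by (metis card_seteq)
  qed
  moreover have "is_chain X {u, v}"
    using assms unfolding is_chain_def by auto
  ultimately have "is_max_chain X {u, v}"
    unfolding is_max_chain_def by blast
  then show ?thesis
    unfolding max_chain_list_def using assms(5) by simp
qed

lemma max_chain_list_obtains_pair:
  assumes "finite X" "poset_connected X" "poset_length X = 1" "max_chain_list X us"
  obtains u v where "us = [u, v]" "u \<in> X" "v \<in> X" "u < v"
proof -
  have sorted: "sorted_wrt (<) us" and chain: "is_chain X (set us)"
    and maximal: "\<And>C. is_chain X C \<Longrightarrow> set us \<subseteq> C \<Longrightarrow> C = set us"
    using assms(4) unfolding max_chain_list_def is_max_chain_def by blast+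
  have "distinct us"
    using sorted by (induction us) auto
  then have "length us \<le> 2"
    using card_chain_le_2[OF assms(1,3) chain] by (simp add: distinct_card)
  moreover have "\<not> length us < 2"
  proof
    assume "length us < 2"
    moreover obtain a b where "a \<in> X" "b \<in> X" "a < b"
      using poset_length_one_obtains_less[OF assms(1,3)] .
    ultimately obtain x where x: "x \<in> X" "set us \<subseteq> {x}"
      using chain unfolding is_chain_def
      by (cases us rule: remdups_adj.cases) auto
    then obtain t where t: "t \<in> X" "t \<noteq> x" "x \<le> t \<or> t \<le> x"
      using poset_connected_obtains_comparable[OF assms(2)] \<open>a \<in> X\<close> \<open>b \<in> X\<close> \<open>a < b\<close>
      by (metis less_irrefl)
    have "is_chain X {x, t}"
      using x t unfolding is_chain_def by auto
    then have "{x, t} = set us"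
      using maximal x(2) by blast
    then show False
      using x(2) t(2) by blast
  qed
  ultimately have "length us = 2"
    by simp
  then obtain u v where "us = [u, v]"
    by (metis (no_types) length_0_conv length_Suc_conv numeral_2_eq_2)
  then show ?thesis
    using that sorted chain unfolding is_chain_def by auto
qed

lemma M_set_length_one:
  assumes "finite X" "poset_connected X" "poset_length X = 1"
  shows "M_set X = {\<theta>. bij_betw \<theta> (basisB X) (basisB X)}"
proof -
  have "increasing_on X \<theta> us"
    if bij: "bij_betw \<theta> (basisB X) (basisB X)" and us: "max_chain_list X us" for \<theta> us
  proof -
    obtain u v where uv: "us = [u, v]" "u \<in> X" "v \<in> X" "u < v"
      using max_chain_list_obtains_pair[OF assms us] .
    then have "(u, v) \<in> basisB X"
      unfolding basisB_def by simp
    then have "\<theta> (u, v) \<in> basisB X"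
      by (rule bij_betw_apply[OF bij])
    then obtain p q where pq: "\<theta> (u, v) = (p, q)" "p \<in> X" "q \<in> X" "p < q"
      unfolding basisB_def by auto
    have "max_chain_list X [p, q]"
      using max_chain_list_pair[OF assms(1,3) pq(2-4)] .
    moreover have "\<theta> (us ! i, us ! j) = ([p, q] ! i, [p, q] ! j)"
      if "i < j" "j < length us" for i j
      using that uv(1) pq(1) by (auto simp: less_Suc_eq)
    ultimately show ?thesis
      unfolding increasing_on_def using uv(1) by (intro exI[of _ "[p, q]"]) auto
  qed
  then show ?thesis
    unfolding M_set_def by blast
qed

section \<open>Adjacency of basis elements\<close>

definition ends :: "'a \<times> 'a \<Rightarrow> 'a set" where
  "ends e = {fst e, snd e}"

lemma comparable_obtains_basisB:
  assumes "p \<in> X" "q \<in> X" "p \<noteq> q" "p \<le> q \<or> q \<le> p"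
  obtains e where "e \<in> basisB X" "ends e = {p, q}"
proof (cases "p < q")
  case True
  then show ?thesis
    using assms that[of "(p, q)"] unfolding basisB_def ends_def by auto
next
  case False
  then show ?thesis
    using assms that[of "(q, p)"] unfolding basisB_def ends_def by (auto simp: order.strict_iff_order)
qed

lemma P_set_preserves_adjacency:
  assumes "\<theta> \<in> P_set X" "e \<in> basisB X" "f \<in> basisB X" "ends e \<inter> ends f \<noteq> {}"
  shows "ends (\<theta> e) \<inter> ends (\<theta> f) \<noteq> {}"
proof -
  consider l where "\<forall>(x, y)\<in>basisB X. \<theta> (x, y) = (l x, l y)"
    | l where "\<forall>(x, y)\<in>basisB X. \<theta> (x, y) = (l y, l x)"
    using assms(1) unfolding P_set_def by blast
  then obtain l where "\<forall>e\<in>basisB X. ends (\<theta> e) = l ` ends e"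
    by cases (fastforce simp: ends_def)+
  then show ?thesis
    using assms(2-4) by blast
qed

lemma transpose_notin_P_set:
  assumes "e \<in> basisB X" "f \<in> basisB X" "f \<noteq> e"
    and "ends e \<inter> ends f \<noteq> {}" "ends e \<inter> ends g = {}"
  shows "transpose f g \<notin> P_set X"
proof
  assume "transpose f g \<in> P_set X"
  moreover have "e \<noteq> g"
    using assms(5) unfolding ends_def by auto
  then have "transpose f g e = e" "transpose f g f = g"
    using assms(3) by simp_all
  ultimately show False
    using P_set_preserves_adjacency[OF _ assms(1,2,4)] assms(5) by metis
qed

lemma adjacent_and_disjoint_edges_if_incomparable:
  assumes conn: "poset_connected X" and ab: "a \<in> X" "b \<in> X" "a < b"
    and y: "y \<in> X" "\<not> (a \<le> y \<or> y \<le> a \<or> b \<le> y \<or> y \<le> b)"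
  obtains f g where "f \<in> basisB X" "g \<in> basisB X" "f \<noteq> (a, b)"
    "ends (a, b) \<inter> ends f \<noteq> {}" "ends (a, b) \<inter> ends g = {}"
proof -
  define S where "S = {x \<in> X. a \<le> x \<or> x \<le> a \<or> b \<le> x \<or> x \<le> b}"
  have "S \<subseteq> X" "a \<in> S" "y \<in> X - S"
    unfolding S_def using ab y by auto
  then obtain x t where xt: "x \<in> S" "t \<in> X - S" "x \<le> t \<or> t \<le> x"
    using poset_connected_crossing[OF conn] by blast
  then have "x \<in> X" "x \<notin> {a, b, t}" "t \<notin> {a, b}"
    unfolding S_def by auto
  then obtain g where g: "g \<in> basisB X" "ends g = {x, t}"
    using comparable_obtains_basisB xt by blast
  obtain f where f: "f \<in> basisB X" "ends f = {x, a} \<or> ends f = {x, b}"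
    using comparable_obtains_basisB[OF \<open>x \<in> X\<close>] ab \<open>x \<notin> {a, b, t}\<close> xt(1)
    unfolding S_def by (metis insertCI mem_Collect_eq)
  have "f \<noteq> (a, b)" "ends (a, b) \<inter> ends f \<noteq> {}" "ends (a, b) \<inter> ends g = {}"
    using f(2) g(2) \<open>x \<notin> {a, b, t}\<close> \<open>t \<notin> {a, b}\<close> unfolding ends_def by auto
  with f(1) g(1) show ?thesis
    using that by blast
qed

lemma adjacent_and_disjoint_edges:
  assumes fin: "finite X" and conn: "poset_connected X" and len: "poset_length X = 1"
    and "card (Min_el X) \<noteq> 1" "card (Max_el X) \<noteq> 1"
  obtains e f g where "e \<in> basisB X" "f \<in> basisB X" "g \<in> basisB X" "f \<noteq> e"
    "ends e \<inter> ends f \<noteq> {}" "ends e \<inter> ends g = {}"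
proof -
  obtain a b where ab: "a \<in> X" "b \<in> X" "a < b"
    using poset_length_one_obtains_less[OF fin len] .
  show ?thesis
  proof (cases "\<exists>y\<in>X. \<not> (a \<le> y \<or> y \<le> a \<or> b \<le> y \<or> y \<le> b)")
    case True
    then obtain y where "y \<in> X" "\<not> (a \<le> y \<or> y \<le> a \<or> b \<le> y \<or> y \<le> b)"
      by blast
    moreover have "(a, b) \<in> basisB X"
      using ab unfolding basisB_def by simp
    ultimately show ?thesis
      using adjacent_and_disjoint_edges_if_incomparable[OF conn ab] that by metis
  next
    case False
    note extremal = less_imp_Min_el_Max_el[OF fin len]
    have "Min_el X \<noteq> {a}" "Max_el X \<noteq> {b}"
      using assms(4,5) by auto
    then obtain a' b' where a': "a' \<in> Min_el X" "a' \<noteq> a" and b': "b' \<in> Max_el X" "b' \<noteq> b"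
      using extremal[OF ab] by blast
    then have "a' \<in> X" "b' \<in> X" "\<forall>y\<in>X. \<not> y < a'" "\<forall>y\<in>X. \<not> b' < y"
      unfolding Min_el_def Max_el_def by auto
    moreover have "\<forall>y\<in>X. \<not> y < a" "\<forall>y\<in>X. \<not> b < y"
      using extremal[OF ab] unfolding Min_el_def Max_el_def by auto
    ultimately have "a' < b" "a < b'" "a' \<noteq> b'"
      using False ab a'(2) b'(2) by (auto simp: order.order_iff_strict)
    then show ?thesis
      using ab a'(2) b'(2) \<open>a' \<in> X\<close> \<open>b' \<in> X\<close>
      by (intro that[of "(a', b)" "(a, b)" "(a, b')"]) (auto simp: basisB_def ends_def)
  qed
qed

section \<open>Stars\<close>

definition is_star_centre :: "'a::order set \<Rightarrow> 'a \<Rightarrow> bool" where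
  "is_star_centre X m \<longleftrightarrow> m \<in> X \<and> (\<forall>x\<in>X. x \<le> m \<or> m \<le> x) \<and>
     (\<forall>x\<in>X. \<forall>y\<in>X. x < y \<longrightarrow> x = m \<or> y = m)"

lemma is_star_centre_if_Min_el:
  assumes "finite X" "poset_length X = 1" "Min_el X = {m}"
  shows "is_star_centre X m"
proof -
  have less: "x = m" if "x \<in> X" "y \<in> X" "x < y" for x y
    using less_imp_Min_el_Max_el(1)[OF assms(1,2) that] assms(3) by blast
  have "m \<le> x" if x: "x \<in> X" for x
  proof (cases "x \<in> Min_el X")
    case True
    then show ?thesis
      using assms(3) by simp
  next
    case False
    then obtain c where "c \<in> X" "c < x"
      using x unfolding Min_el_def by auto
    then show ?thesis
      using less x by fastforce
  qed
  moreover have "m \<in> X"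
    using assms(3) unfolding Min_el_def by auto
  ultimately show ?thesis
    unfolding is_star_centre_def using less by blast
qed

lemma is_star_centre_if_Max_el:
  assumes "finite X" "poset_length X = 1" "Max_el X = {m}"
  shows "is_star_centre X m"
proof -
  have less: "y = m" if "x \<in> X" "y \<in> X" "x < y" for x y
    using less_imp_Min_el_Max_el(2)[OF assms(1,2) that] assms(3) by blast
  have "x \<le> m" if x: "x \<in> X" for x
  proof (cases "x \<in> Max_el X")
    case True
    then show ?thesis
      using assms(3) by simp
  next
    case False
    then obtain c where "c \<in> X" "x < c"
      using x unfolding Max_el_def by auto
    then show ?thesis
      using less x by fastforce
  qed
  moreover have "m \<in> X"
    using assms(3) unfolding Max_el_def by auto
  ultimately show ?thesis
    unfolding is_star_centre_def using less by blast
qed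

lemma is_star_centre_same_side:
  assumes "is_star_centre X m" "x \<in> X - {m}" "y \<in> X - {m}" "m < x"
  shows "m < y"
proof (rule ccontr)
  assume "\<not> m < y"
  then have "y < m"
    using assms(1,3) unfolding is_star_centre_def by (auto simp: order.order_iff_strict)
  then have "y < x"
    using assms(4) by (rule less_trans)
  then show False
    using assms unfolding is_star_centre_def by blast
qed

lemma star_centre_le_iff:
  assumes "is_star_centre X m" "x \<in> X" "y \<in> X"
  shows "x \<le> y \<longleftrightarrow> x = y \<or> (x = m \<and> m < y) \<or> (y = m \<and> x \<noteq> m \<and> \<not> m < x)"
  using assms unfolding is_star_centre_def by (auto simp: order.order_iff_strict)

lemma is_automorphism_if_star_centre:
  assumes star: "is_star_centre X m" and bij: "bij_betw l X X" and "l m = m"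
    and side: "\<And>y. y \<in> X - {m} \<Longrightarrow> m < l y \<longleftrightarrow> m < y"
  shows "is_automorphism X l"
proof -
  have "x \<le> y \<longleftrightarrow> l x \<le> l y" if xy: "x \<in> X" "y \<in> X" for x y
  proof -
    have "m \<in> X"
      using star unfolding is_star_centre_def by blast
    then have "l x \<in> X" "l y \<in> X" "l x = l y \<longleftrightarrow> x = y" "l x = m \<longleftrightarrow> x = m" "l y = m \<longleftrightarrow> y = m"
      using xy bij \<open>l m = m\<close> by (auto simp: bij_betw_def inj_on_def)
    then show ?thesis
      using star_centre_le_iff[OF star] xy side by (metis insert_Diff insert_iff)
  qed
  then show ?thesis
    unfolding is_automorphism_def using bij by blast
qed

definition star_edge :: "'a::order \<Rightarrow> 'a \<Rightarrow> 'a \<times> 'a" where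
  "star_edge m y = (if m < y then (m, y) else (y, m))"

lemma bij_betw_star_edge:
  assumes "is_star_centre X m"
  shows "bij_betw (star_edge m) (X - {m}) (basisB X)"
proof (rule bij_betw_imageI)
  show "inj_on (star_edge m) (X - {m})"
    by (rule inj_onI) (auto simp: star_edge_def split: if_splits)
  show "star_edge m ` (X - {m}) = basisB X"
  proof
    show "star_edge m ` (X - {m}) \<subseteq> basisB X"
      using assms unfolding is_star_centre_def
      by (auto simp: star_edge_def basisB_def order.order_iff_strict)
    show "basisB X \<subseteq> star_edge m ` (X - {m})"
    proof
      fix e
      assume "e \<in> basisB X"
      then obtain x y where "e = (x, y)" "x \<in> X" "y \<in> X" "x < y"
        unfolding basisB_def by blast
      then have "e = star_edge m y \<and> y \<in> X - {m} \<or> e = star_edge m x \<and> x \<in> X - {m}"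
        using assms unfolding is_star_centre_def by (auto simp: star_edge_def)
      then show "e \<in> star_edge m ` (X - {m})"
        by blast
    qed
  qed
qed

lemma bij_in_P_set_if_star_centre:
  assumes star: "is_star_centre X m" and bij: "bij_betw \<theta> (basisB X) (basisB X)"
  shows "\<theta> \<in> P_set X"
proof -
  note edge_bij = bij_betw_star_edge[OF star]
  define l where
    "l y = (if y = m then m else the_inv_into (X - {m}) (star_edge m) (\<theta> (star_edge m y)))" for y
  have l_rest: "bij_betw l (X - {m}) (X - {m})"
  proof -
    have "bij_betw (the_inv_into (X - {m}) (star_edge m) \<circ> \<theta> \<circ> star_edge m) (X - {m}) (X - {m})"
      using edge_bij bij by (intro bij_betw_trans bij_betw_the_inv_into)
    then show ?thesis
      by (rule bij_betw_cong[THEN iffD1, rotated]) (simp add: l_def)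
  qed
  have "m \<in> X"
    using star unfolding is_star_centre_def by blast
  then have l_bij: "bij_betw l X X"
    using notIn_Un_bij_betw[OF _ _ l_rest, of m] by (simp add: l_def insert_absorb)
  have l_edge: "\<theta> (star_edge m y) = star_edge m (l y)" if "y \<in> X - {m}" for y
    using that f_the_inv_into_f_bij_betw[OF edge_bij] bij_betw_apply[OF bij]
      bij_betw_apply[OF edge_bij] unfolding l_def by auto
  have l_side: "m < l y \<longleftrightarrow> m < y" if "y \<in> X - {m}" for y
    using is_star_centre_same_side[OF star] that bij_betw_apply[OF l_rest that] by blast
  have "l m = m"
    by (simp add: l_def)
  with star l_bij have "is_automorphism X l"
    using l_side by (rule is_automorphism_if_star_centre)
  moreover have "\<theta> (x, y) = (l x, l y)" if "(x, y) \<in> basisB X" for x y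
  proof -
    have xy: "x \<in> X" "y \<in> X" "x < y"
      using that unfolding basisB_def by auto
    then consider "x = m" "y \<in> X - {m}" | "y = m" "x \<in> X - {m}"
      using star unfolding is_star_centre_def by blast
    then show ?thesis
    proof cases
      case 1
      then show ?thesis
        using l_edge[of y] l_side[of y] xy(3) by (simp add: star_edge_def l_def)
    next
      case 2
      then show ?thesis
        using l_edge[of x] l_side[of x] xy(3) by (auto simp: star_edge_def l_def)
    qed
  qed
  ultimately show ?thesis
    unfolding P_set_def using bij by blast
qed

theorem proposition4p6:
  fixes X :: "'a::order set"
  assumes "finite X" and "poset_connected X" and "poset_length X = 1"
  shows "M_set X = P_set X \<longleftrightarrow> card (Min_el X) = 1 \<or> card (Max_el X) = 1"
proof
  assume M_eq_P: "M_set X = P_set X"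
  show "card (Min_el X) = 1 \<or> card (Max_el X) = 1"
  proof (rule ccontr)
    assume "\<not> ?thesis"
    then obtain e f g where efg: "e \<in> basisB X" "f \<in> basisB X" "g \<in> basisB X" "f \<noteq> e"
      "ends e \<inter> ends f \<noteq> {}" "ends e \<inter> ends g = {}"
      using adjacent_and_disjoint_edges[OF assms] by blast
    have "transpose f g \<in> M_set X"
      unfolding M_set_length_one[OF assms] using efg(2,3) by simp
    moreover have "transpose f g \<notin> P_set X"
      using transpose_notin_P_set efg by blast
    ultimately show False
      using M_eq_P by simp
  qed
next
  assume "card (Min_el X) = 1 \<or> card (Max_el X) = 1"
  then obtain m where "is_star_centre X m"
    using is_star_centre_if_Min_el is_star_centre_if_Max_el assms(1,3)
    by (metis card_1_singletonE)
  then have "M_set X \<subseteq> P_set X"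
    unfolding M_set_length_one[OF assms] using bij_in_P_set_if_star_centre by blast
  moreover have "P_set X \<subseteq> M_set X"
    unfolding M_set_length_one[OF assms] P_set_def by blast
  ultimately show "M_set X = P_set X"
    by blast
qed

end
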